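(* Assume $n\ge 3t+1$. In any execution of COOL, if $\eta^{[2]}=2$ then $\eta^{[1]}=2$.
   Context: Setting. $n$ processors indexed by $[1:n]$, pairwise joined by reliable private synchronous channels; recipients know senders. At most $t$ processors are dishonest, controlled by an adversary who may make them deviate arbitrarily (missing values replaced by a fixed default); the others are honest. Processor $i$ holds an $\ell$-bit initial message $\boldsymbol w_i$. $\phi$ is a default value different from every $\ell$-bit message. Logarithms are base 2. Code. $k=\lfloor t/5\rfloor+1$, $c=\lceil \max\{\ell,(t/5+1)\log(n+1)\}/k\rceil$. Messages are zero-padded to $kc$ bits and viewed in $GF(2^c)^k$. Integers in $[1:n]$ are identified with distinct nonzero elements of $GF(2^c)$; $\boldsymbol h_i\in GF(2^c)^k$ has entries $h_{i,j}=\prod_{p\in[1:k],\,p\ne j}\frac{i-p}{j-p}$ (field arithmetic). COOL, Phases 1–2 (honest processor $i$). Initialization: updated message $\boldsymbol w^{(i)}:=\boldsymbol w_i$, $y^{(i)}_j:=\boldsymbol h_j^{\mathsf T}\boldsymbol w_i$, $u_i(i):=1$. Phase 1. (a) Send $(y^{(i)}_j,y^{(i)}_i)$ to each $j\ne i$. (b) For $j\ne i$, link indicator $u_i(j):=1$ if the pair received from $j$ equals $(y^{(i)}_i,y^{(i)}_j)$, else $0$. Success indicator $s_i:=1$ if $\sum_{j=1}^n u_i(j)\ge n-t$; otherwise $s_i:=0$ and $\boldsymbol w^{(i)}:=\phi$. (c) Send $s_i$ to all; each processor records the indicator received from each $j$ (own for itself) and forms $\mathcal S_1=\{j:s_j=1\}$,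 $\mathcal S_0=\{j:s_j=0\}$ (views may differ between processors). Phase 2. If $s_i=1$: set $u_i(j):=0$ for all $j\in\mathcal S_0$; if now $\sum_j u_i(j)<n-t$, set $s_i:=0$, $\boldsymbol w^{(i)}:=\phi$ and send $s_i=0$ to all. Everyone overwrites recorded indicators with newly received ones and recomputes $\mathcal S_0,\mathcal S_1$. Notation. For $p\in\{1,2\}$, $s^{[p]}_i$ is the value of honest processor $i$'s success indicator at the end of Phase $p$, and $\eta^{[p]}$ is the number of distinct values in $\{\boldsymbol w_i: i\text{ honest},\ s^{[p]}_i=1\}$ (initial messages). *)

theory Defs
  imports Complex_Main
begin

definition kpar :: "nat \<Rightarrow> nat" where
  "kpar t = t div 5 + 1"

definition cpar :: "nat \<Rightarrow> nat \<Rightarrow> nat \<Rightarrow> nat" where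
  "cpar n t l = nat \<lceil>max (real l) ((real t / 5 + 1) * log 2 (real n + 1)) / real (kpar t)\<rceil>"

text \<open>Zero-pad a message to k*c bits and view it in GF(2^c)^k (components indexed 1..k),
  using a fixed identification bits of c-bit strings with field elements.\<close>
definition msg_vec :: "(bool list \<Rightarrow> 'f) \<Rightarrow> nat \<Rightarrow> nat \<Rightarrow> bool list \<Rightarrow> nat \<Rightarrow> 'f" where
  "msg_vec bits k c w m = bits (take c (drop ((m - 1) * c) (w @ replicate (k * c - length w) False)))"

definition hcoef :: "(nat \<Rightarrow> 'f::field) \<Rightarrow> nat \<Rightarrow> nat \<Rightarrow> nat \<Rightarrow> 'f" where
  "hcoef e k i j = (\<Prod>p\<in>{1..k} - {j}. (e i - e p) / (e j - e p))"

definition enc :: "(nat \<Rightarrow> 'f::field) \<Rightarrow> nat \<Rightarrow> (nat \<Rightarrow> 'f) \<Rightarrow> nat \<Rightarrow> 'f" where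
  "enc e k v j = (\<Sum>m\<in>{1..k}. hcoef e k j m * v m)"

definition Ycode :: "(nat \<Rightarrow> 'f::field) \<Rightarrow> (bool list \<Rightarrow> 'f) \<Rightarrow> nat \<Rightarrow> nat \<Rightarrow> nat
    \<Rightarrow> (nat \<Rightarrow> bool list) \<Rightarrow> nat \<Rightarrow> nat \<Rightarrow> 'f" where
  "Ycode e bits n t l w i j = enc e (kpar t) (msg_vec bits (kpar t) (cpar n t l) (w i)) j"

text \<open>Phase 1 link indicator u_i(j) of honest processor i.  The pair received from j is
  (Y j i, Y j j) if j is honest, and the adversarially chosen adv1 j i otherwise.\<close>
definition link1 :: "nat set \<Rightarrow> (nat \<Rightarrow> nat \<Rightarrow> 'f) \<Rightarrow> (nat \<Rightarrow> nat \<Rightarrow> 'f \<times> 'f) \<Rightarrow> nat \<Rightarrow> nat \<Rightarrow> bool" where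
  "link1 H Y adv1 i j =
     (j = i \<or> (if j \<in> H then (Y j i, Y j j) else adv1 j i) = (Y i i, Y i j))"

definition succ1 :: "nat \<Rightarrow> nat \<Rightarrow> nat set \<Rightarrow> (nat \<Rightarrow> nat \<Rightarrow> 'f) \<Rightarrow> (nat \<Rightarrow> nat \<Rightarrow> 'f \<times> 'f) \<Rightarrow> nat \<Rightarrow> bool" where
  "succ1 n t H Y adv1 i = (card {j \<in> {1..n}. link1 H Y adv1 i j} \<ge> n - t)"

text \<open>j \<in> S_0 in honest processor i's view after Phase 1(c); dishonest j sends adv2 j i.\<close>
definition inS0 :: "nat \<Rightarrow> nat \<Rightarrow> nat set \<Rightarrow> (nat \<Rightarrow> nat \<Rightarrow> 'f) \<Rightarrow> (nat \<Rightarrow> nat \<Rightarrow> 'f \<times> 'f)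
    \<Rightarrow> (nat \<Rightarrow> nat \<Rightarrow> bool) \<Rightarrow> nat \<Rightarrow> nat \<Rightarrow> bool" where
  "inS0 n t H Y adv1 adv2 i j =
     (if j \<in> H then \<not> succ1 n t H Y adv1 j else \<not> adv2 j i)"

definition succ2 :: "nat \<Rightarrow> nat \<Rightarrow> nat set \<Rightarrow> (nat \<Rightarrow> nat \<Rightarrow> 'f) \<Rightarrow> (nat \<Rightarrow> nat \<Rightarrow> 'f \<times> 'f)
    \<Rightarrow> (nat \<Rightarrow> nat \<Rightarrow> bool) \<Rightarrow> nat \<Rightarrow> bool" where
  "succ2 n t H Y adv1 adv2 i =
     (succ1 n t H Y adv1 i \<and>
      card {j \<in> {1..n}. link1 H Y adv1 i j \<and> \<not> inS0 n t H Y adv1 adv2 i j} \<ge> n - t)"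

definition eta :: "nat set \<Rightarrow> (nat \<Rightarrow> bool) \<Rightarrow> (nat \<Rightarrow> bool list) \<Rightarrow> nat" where
  "eta H s w = card (w ` {i \<in> H. s i})"

end

theory Submission
  imports Defs "HOL-Computational_Algebra.Polynomial"
begin

(* Phase 2 only revokes successes, so eta[2] <= eta[1], and it suffices to show eta[1] <= 2.
   The coded symbols h_j^T w of a message are the values at e j of the polynomial of degree < k
   interpolating w at e 1, ..., e k; hence the symbols of two distinct messages agree in fewer than
   k positions.  An honest processor x succeeding in Phase 1 has at least n - t - d consistent links
   to honest processors (d dishonest processors), and an honest j consistently linked to both x and y
   satisfies y^(x)_j = y^(j)_j = y^(y)_j.  Three successful honest processors with pairwise distinct
   messages would thus give, by inclusion-exclusion among the n - d honest processors,
   3 (n - t - d) <= (n - d) + 3 (k - 1), contradicting n >= 3 t + 1 and k - 1 <= t / 5. *)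

lemma hcoef_at_node:
  fixes e :: "nat \<Rightarrow> 'f::field"
  assumes "inj_on e {1..k}" and "i \<in> {1..k}" and "j \<in> {1..k}"
  shows "hcoef e k i j = (if j = i then 1 else 0)"
proof (cases "j = i")
  case True
  have "e i \<noteq> e p" if "p \<in> {1..k} - {i}" for p
    using assms that by (auto dest: inj_onD)
  then show ?thesis
    using True by (simp add: hcoef_def)
next
  case False
  then have "i \<in> {1..k} - {j}"
    using assms by auto
  then show ?thesis
    using False by (auto simp: hcoef_def intro: prod_zero)
qed

lemma enc_at_node:
  fixes e :: "nat \<Rightarrow> 'f::field"
  assumes "inj_on e {1..k}" and "i \<in> {1..k}"
  shows "enc e k v i = v i"
proof -
  have "enc e k v i = (\<Sum>j\<in>{1..k}. if j = i then v j else 0)"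
    unfolding enc_def using assms by (intro sum.cong) (simp_all add: hcoef_at_node)
  then show ?thesis
    using assms(2) by simp
qed

definition lagrange_poly :: "(nat \<Rightarrow> 'f::field) \<Rightarrow> nat \<Rightarrow> (nat \<Rightarrow> 'f) \<Rightarrow> 'f poly" where
  "lagrange_poly e k v =
     (\<Sum>m\<in>{1..k}. smult (v m / (\<Prod>p\<in>{1..k} - {m}. e m - e p)) (\<Prod>p\<in>{1..k} - {m}. [:- e p, 1:]))"

lemma poly_lagrange_poly: "poly (lagrange_poly e k v) (e i) = enc e k v i"
  by (simp add: lagrange_poly_def enc_def hcoef_def poly_sum poly_prod prod_dividef ac_simps)

lemma degree_lagrange_poly: "degree (lagrange_poly e k v) \<le> k - 1"
  unfolding lagrange_poly_def
proof (intro degree_sum_le order.trans[OF degree_smult_le])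
  fix m assume "m \<in> {1..k}"
  have "degree (\<Prod>p\<in>{1..k} - {m}. [:- e p, 1:]) \<le> (\<Sum>p\<in>{1..k} - {m}. degree [:- e p, 1:])"
    using degree_prod_sum_le[of "{1..k} - {m}" "\<lambda>p. [:- e p, 1:]"] by (simp add: comp_def)
  also have "\<dots> = k - 1"
    using \<open>m \<in> {1..k}\<close> by simp
  finally show "degree (\<Prod>p\<in>{1..k} - {m}. [:- e p, 1:]) \<le> k - 1" .
qed simp

lemma enc_eq_on_imp_eq:
  fixes e :: "nat \<Rightarrow> 'f::field"
  assumes inj: "inj_on e (P \<union> {1..k})" and card: "k \<le> card P"
    and agree: "\<forall>p\<in>P. enc e k v p = enc e k v' p" and m: "m \<in> {1..k}"
  shows "v m = v' m"
proof -
  have "card (e ` P) = card P"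
    using inj by (auto intro: card_image inj_on_subset)
  moreover have "k - 1 < card P"
    using card m by (cases k) auto
  ultimately have "lagrange_poly e k v = lagrange_poly e k v'"
    using agree by (intro poly_eqI_degree[where A = "e ` P"])
      (auto simp: poly_lagrange_poly intro: le_less_trans[OF degree_lagrange_poly])
  then have "enc e k v m = enc e k v' m"
    by (metis poly_lagrange_poly)
  moreover have "inj_on e {1..k}"
    using inj by (rule inj_on_subset) simp
  ultimately show ?thesis
    using m by (simp add: enc_at_node)
qed

lemma kpar_mult_cpar_ge: "l \<le> kpar t * cpar n t l"
proof -
  have k: "real (kpar t) \<ge> 1"
    by (simp add: kpar_def)
  have "real l / real (kpar t) \<le> max (real l) ((real t / 5 + 1) * log 2 (real n + 1)) / real (kpar t)"
    using k by (intro divide_right_mono) auto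
  also have "\<dots> \<le> real (cpar n t l)"
    unfolding cpar_def by linarith
  finally have "real l \<le> real (kpar t) * real (cpar n t l)"
    using k by (simp add: field_simps)
  then show ?thesis
    by (simp flip: of_nat_mult)
qed

lemma list_eq_if_blocks_eq:
  assumes "length xs = k * c" and "length ys = k * c"
    and "\<forall>m<k. take c (drop (m * c) xs) = take c (drop (m * c) ys)"
  shows "xs = ys"
  using assms
proof (induction k arbitrary: xs ys)
  case 0
  then show ?case by simp
next
  case (Suc k)
  have "take c xs = take c ys"
    using Suc.prems(3) by auto
  moreover have "drop c xs = drop c ys"
  proof (rule Suc.IH)
    show "\<forall>m<k. take c (drop (m * c) (drop c xs)) = take c (drop (m * c) (drop c ys))"
      using Suc.prems(3) by (auto simp: add.commute)
  qed (use Suc.prems in simp_all)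
  ultimately show ?case
    by (metis append_take_drop_id)
qed

lemma msg_vec_eq_imp_eq:
  assumes "length w = length w'" and "length w \<le> k * c"
    and "inj_on bits {xs. length xs = c}"
    and "\<forall>m\<in>{1..k}. msg_vec bits k c w m = msg_vec bits k c w' m"
  shows "w = w'"
proof -
  define pad where "pad u = u @ replicate (k * c - length u) False" for u :: "bool list"
  have "pad w = pad w'"
  proof (rule list_eq_if_blocks_eq)
    show "length (pad w) = k * c" "length (pad w') = k * c"
      using assms(1,2) by (simp_all add: pad_def)
    show "\<forall>m<k. take c (drop (m * c) (pad w)) = take c (drop (m * c) (pad w'))"
    proof (intro allI impI)
      fix m assume "m < k"
      then have "msg_vec bits k c w (Suc m) = msg_vec bits k c w' (Suc m)"
        using assms(4) by simp
      then have "bits (take c (drop (m * c) (pad w))) = bits (take c (drop (m * c) (pad w')))"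
        by (simp add: msg_vec_def pad_def)
      moreover have "Suc m * c \<le> k * c"
        using \<open>m < k\<close> by (intro mult_le_mono1) simp
      then have "length (take c (drop (m * c) (pad u))) = c" if "length u \<le> k * c" for u
        using that by (simp add: pad_def)
      ultimately show "take c (drop (m * c) (pad w)) = take c (drop (m * c) (pad w'))"
        using assms(1-3) by (auto dest: inj_onD)
    qed
  qed
  then have "take (length w) (pad w) = take (length w') (pad w')"
    using assms(1) by simp
  then show ?thesis
    by (simp add: pad_def)
qed

lemma card_Ycode_agreements_less:
  assumes "length (w x) = l" and "length (w y) = l" and "w x \<noteq> w y"
    and "inj_on bits {xs. length xs = cpar n t l}" and "inj_on e {1..n}" and "kpar t \<le> n"
  shows "card {p \<in> {1..n}. Ycode e bits n t l w x p = Ycode e bits n t l w y p} < kpar t"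
proof (rule ccontr)
  let ?P = "{p \<in> {1..n}. Ycode e bits n t l w x p = Ycode e bits n t l w y p}"
  let ?v = "\<lambda>i. msg_vec bits (kpar t) (cpar n t l) (w i)"
  assume "\<not> ?thesis"
  then have card: "kpar t \<le> card ?P"
    by simp
  have inj: "inj_on e (?P \<union> {1..kpar t})"
    using assms(5) by (rule inj_on_subset) (use assms(6) in auto)
  have "?v x m = ?v y m" if "m \<in> {1..kpar t}" for m
    by (rule enc_eq_on_imp_eq[OF inj card _ that]) (simp add: Ycode_def)
  then have "w x = w y"
    using assms(1,2) kpar_mult_cpar_ge[of l t n] by (intro msg_vec_eq_imp_eq[OF _ _ assms(4)]) auto
  with assms(3) show False ..
qed

definition honest_links :: "nat set \<Rightarrow> (nat \<Rightarrow> nat \<Rightarrow> 'f) \<Rightarrow> (nat \<Rightarrow> nat \<Rightarrow> 'f \<times> 'f) \<Rightarrow> nat \<Rightarrow> nat set" where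
  "honest_links H Y adv1 i = {j \<in> H. link1 H Y adv1 i j}"

lemma honest_links_Int_subset:
  assumes "x \<in> H" and "y \<in> H"
  shows "honest_links H Y adv1 x \<inter> honest_links H Y adv1 y \<subseteq> {j \<in> H. Y x j = Y y j}"
  using assms by (auto simp: honest_links_def link1_def)

lemma card_honest_links_Int_less:
  assumes "H \<subseteq> {1..n}" and "x \<in> H" and "y \<in> H" and "w x \<noteq> w y"
    and "\<forall>i\<in>H. length (w i) = l" and "inj_on bits {xs. length xs = cpar n t l}"
    and "inj_on e {1..n}" and "kpar t \<le> n"
  shows "card (honest_links H (Ycode e bits n t l w) adv1 x \<inter> honest_links H (Ycode e bits n t l w) adv1 y)
    < kpar t"
proof -
  let ?Y = "Ycode e bits n t l w"
  have "honest_links H ?Y adv1 x \<inter> honest_links H ?Y adv1 y \<subseteq> {p \<in> {1..n}. ?Y x p = ?Y y p}"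
    using honest_links_Int_subset[OF assms(2,3), of ?Y adv1] assms(1) by blast
  then have "card (honest_links H ?Y adv1 x \<inter> honest_links H ?Y adv1 y)
      \<le> card {p \<in> {1..n}. ?Y x p = ?Y y p}"
    by (intro card_mono) auto
  also have "\<dots> < kpar t"
    using assms by (intro card_Ycode_agreements_less) auto
  finally show ?thesis .
qed

lemma card_honest_links_ge:
  assumes "H \<subseteq> {1..n}" and "succ1 n t H Y adv1 i"
  shows "n - t \<le> card (honest_links H Y adv1 i) + card ({1..n} - H)"
proof -
  have "{j \<in> {1..n}. link1 H Y adv1 i j} \<subseteq> honest_links H Y adv1 i \<union> ({1..n} - H)"
    by (auto simp: honest_links_def)
  moreover have "finite (honest_links H Y adv1 i)"
    using assms(1) by (auto simp: honest_links_def intro: finite_subset)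
  ultimately have "card {j \<in> {1..n}. link1 H Y adv1 i j} \<le> card (honest_links H Y adv1 i \<union> ({1..n} - H))"
    by (intro card_mono) auto
  also have "\<dots> \<le> card (honest_links H Y adv1 i) + card ({1..n} - H)"
    by (rule card_Un_le)
  finally show ?thesis
    using assms(2) by (simp add: succ1_def)
qed

lemma card_sum3_le_card_Un_Int:
  assumes "finite A" and "finite B" and "finite C"
  shows "card A + card B + card C
    \<le> card (A \<union> B \<union> C) + card (A \<inter> B) + card (A \<inter> C) + card (B \<inter> C)"
proof -
  have "card ((A \<union> B) \<inter> C) \<le> card (A \<inter> C) + card (B \<inter> C)"
    by (metis Int_Un_distrib2 card_Un_le)
  then show ?thesis
    using card_Un_Int[of A B] card_Un_Int[of "A \<union> B" C] assms by simp
qed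

lemma card_image_le_2I:
  assumes "\<And>x y z. \<lbrakk>x \<in> A; y \<in> A; z \<in> A; f x \<noteq> f y; f x \<noteq> f z; f y \<noteq> f z\<rbrakk> \<Longrightarrow> False"
  shows "card (f ` A) \<le> 2"
proof (rule ccontr)
  assume "\<not> ?thesis"
  then obtain T where "T \<subseteq> f ` A" and "card T = 3"
    by (metis not_le_imp_less Suc_leI numeral_2_eq_2 numeral_3_eq_3 obtain_subset_with_card_n)
  then obtain a b c where "{a, b, c} \<subseteq> f ` A" and "a \<noteq> b" "a \<noteq> c" "b \<noteq> c"
    by (auto simp: card_3_iff)
  then obtain x y z where "x \<in> A" "y \<in> A" "z \<in> A" "f x = a" "f y = b" "f z = c"
    by (metis image_iff insert_subset)
  then show False
    using assms \<open>a \<noteq> b\<close> \<open>a \<noteq> c\<close> \<open>b \<noteq> c\<close> by metis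
qed

lemma eta_mono:
  assumes "finite H" and "\<And>i. \<lbrakk>i \<in> H; s i\<rbrakk> \<Longrightarrow> s' i"
  shows "eta H s w \<le> eta H s' w"
  unfolding eta_def using assms by (intro card_mono) auto

lemma eta_succ1_le_2:
  fixes e :: "nat \<Rightarrow> 'f::field"
  assumes n: "3 * t + 1 \<le> n" and H: "H \<subseteq> {1..n}" and dishonest: "card ({1..n} - H) \<le> t"
    and len: "\<forall>i\<in>H. length (w i) = l"
    and bits: "inj_on bits {xs. length xs = cpar n t l}" and e: "inj_on e {1..n}"
  shows "eta H (succ1 n t H (Ycode e bits n t l w) adv1) w \<le> 2"
  unfolding eta_def
proof (rule card_image_le_2I)
  let ?Y = "Ycode e bits n t l w"
  let ?N = "honest_links H ?Y adv1"
  let ?d = "card ({1..n} - H)"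
  have finite_N: "finite (?N i)" for i
    using H by (auto simp: honest_links_def intro: finite_subset)
  have "kpar t \<le> n"
    using n by (simp add: kpar_def)
  then have overlap: "card (?N x \<inter> ?N y) < kpar t" if "x \<in> H" "y \<in> H" "w x \<noteq> w y" for x y
    using H that len bits e by (intro card_honest_links_Int_less)
  have links: "n - t \<le> card (?N i) + ?d" if "i \<in> {i \<in> H. succ1 n t H ?Y adv1 i}" for i
    using H that by (blast intro: card_honest_links_ge)
  fix x y z
  assume x: "x \<in> {i \<in> H. succ1 n t H ?Y adv1 i}" and y: "y \<in> {i \<in> H. succ1 n t H ?Y adv1 i}"
    and z: "z \<in> {i \<in> H. succ1 n t H ?Y adv1 i}"
    and distinct: "w x \<noteq> w y" "w x \<noteq> w z" "w y \<noteq> w z"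
  note links[OF x] links[OF y] links[OF z]
  moreover have "card (?N x \<inter> ?N y) < kpar t" "card (?N x \<inter> ?N z) < kpar t"
    "card (?N y \<inter> ?N z) < kpar t"
    using x y z distinct by (auto intro: overlap)
  moreover have "card (?N x \<union> ?N y \<union> ?N z) \<le> n - ?d"
  proof -
    have "card (?N x \<union> ?N y \<union> ?N z) \<le> card H"
      using H by (intro card_mono) (auto simp: honest_links_def intro: finite_subset)
    also have "\<dots> = n - ?d"
      using H card_mono[OF _ H] by (simp add: card_Diff_subset finite_subset)
    finally show ?thesis .
  qed
  moreover have "card (?N x) + card (?N y) + card (?N z)
    \<le> card (?N x \<union> ?N y \<union> ?N z) + card (?N x \<inter> ?N y) + card (?N x \<inter> ?N z) + card (?N y \<inter> ?N z)"
    using finite_N by (intro card_sum3_le_card_Un_Int)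
  moreover have "kpar t = t div 5 + 1" and "5 * (t div 5) \<le> t"
    by (simp_all add: kpar_def)
  ultimately show False
    using n dishonest by fastforce
qed

theorem lemma13:
  fixes n t l :: nat and H :: "nat set" and w :: "nat \<Rightarrow> bool list"
    and e :: "nat \<Rightarrow> 'f::{field,finite}" and bits :: "bool list \<Rightarrow> 'f"
    and adv1 :: "nat \<Rightarrow> nat \<Rightarrow> 'f \<times> 'f" and adv2 :: "nat \<Rightarrow> nat \<Rightarrow> bool"
  assumes "n \<ge> 3 * t + 1"
    and "H \<subseteq> {1..n}" and "card ({1..n} - H) \<le> t"
    and "\<forall>i\<in>H. length (w i) = l"
    and "card (UNIV :: 'f set) = 2 ^ cpar n t l"
    and "bij_betw bits {xs. length xs = cpar n t l} UNIV"
    and "inj_on e {1..n}" and "\<forall>i\<in>{1..n}. e i \<noteq> 0"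
    and "eta H (succ2 n t H (Ycode e bits n t l w) adv1 adv2) w = 2"
  shows "eta H (succ1 n t H (Ycode e bits n t l w) adv1) w = 2"
proof -
  let ?Y = "Ycode e bits n t l w"
  have "finite H"
    using assms(2) finite_subset by blast
  then have "eta H (succ2 n t H ?Y adv1 adv2) w \<le> eta H (succ1 n t H ?Y adv1) w"
    by (rule eta_mono) (simp add: succ2_def)
  moreover have "eta H (succ1 n t H ?Y adv1) w \<le> 2"
    using assms(1-4,7) bij_betw_imp_inj_on[OF assms(6)] by (intro eta_succ1_le_2) auto
  ultimately show ?thesis
    using assms(9) by linarith
qed

end
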